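(* Suppose the representation has a single equivalence class $h$ of irreducible components, with multiplicity $m_h\ge1$, so $\mathcal H=\mathcal H_h\otimes\mathbb C^{m_h}$ and $\mathcal C=\{\Xi\ge0:\operatorname{Tr}_{\mathcal H_h}(\Xi)=d_{\mathcal H_h}I_{m_h}\}$. Let $\Xi\in\mathcal C$ and write $\Xi=\sum_{i=1}^r|w_i\rangle\langle w_i|$ with $r=\operatorname{rank}\Xi$ and $\{|w_i\rangle\}$ mutually orthogonal nonzero vectors (spectral decomposition with eigenvalues absorbed). Fix an orthonormal basis $\{|l\rangle\}$ of $\mathcal H_h$ and define $W_i\in\mathcal B(\mathcal H_h,\mathbb C^{m_h})$ by $|w_i\rangle=\sum_l|l\rangle\otimes W_i|l\rangle$. Then $\Xi$ is extremal in $\mathcal C$ if and only if the operators $\{W_iW_j^\dagger\}_{i,j=1}^r\subseteq\mathcal B(\mathbb C^{m_h})$ are linearly independent. In particular, every extremal $\Xi$ has $\operatorname{rank}(\Xi)\le m_h$.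
   Context: Let $G$ be a group with a unitary representation $g\mapsto U_g$ on a finite-dimensional Hilbert space $\mathcal H$ which is a multiple of a single irreducible representation: $\mathcal H=\mathcal H_h\otimes\mathbb C^{m_h}$, $U_g=U^{(h)}_g\otimes I_{m_h}$ with $U^{(h)}$ irreducible on $\mathcal H_h$; $d_{\mathcal H_h}=\dim\mathcal H_h$ and $\operatorname{Tr}_{\mathcal H_h}$ is the partial trace over $\mathcal H_h$. $\mathcal C$ is the convex set of seeds $\Xi$ of covariant POVMs $dP_g=U_g^\dagger\Xi U_g\,dg$. *)

theory Defs
  imports "HOL-Analysis.Analysis" "HOL-Library.Complex_Order"
begin

text \<open>Hilbert space H = H_h \<otimes> C^m, modelled as complex^('d \<times> 'm):
  the basis vector |l> \<otimes> |a> has index (l, a). Operators are complex matrices.\<close>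

definition cinner :: "complex^'n::finite \<Rightarrow> complex^'n \<Rightarrow> complex" where
  "cinner x y = (\<Sum>k\<in>UNIV. cnj (x $ k) * y $ k)"

definition outer :: "complex^'n \<Rightarrow> complex^'k \<Rightarrow> complex^'k^'n" where
  "outer u v = (\<chi> x y. u $ x * cnj (v $ y))"

definition adj :: "complex^'c^'r \<Rightarrow> complex^'r^'c" where
  "adj A = (\<chi> i j. cnj (A $ j $ i))"

text \<open>Positive semidefinite: <x, A x> \<ge> 0 for all x (complex order; implies Hermitian).\<close>
definition psd :: "complex^'n::finite^'n \<Rightarrow> bool" where
  "psd A \<longleftrightarrow> (\<forall>x. 0 \<le> cinner x (A *v x))"

definition ptrace_h :: "complex^('d::finite \<times> 'm::finite)^('d \<times> 'm) \<Rightarrow> complex^'m^'m" where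
  "ptrace_h X = (\<chi> a b. \<Sum>l\<in>UNIV. X $ (l, a) $ (l, b))"

definition seeds :: "(complex^('d::finite \<times> 'm::finite)^('d \<times> 'm)) set" where
  "seeds = {X. psd X \<and> ptrace_h X = mat (of_nat CARD('d))}"

definition lin_indep_family :: "('i \<Rightarrow> complex^'c^'r) \<Rightarrow> 'i set \<Rightarrow> bool" where
  "lin_indep_family f I \<longleftrightarrow>
     (\<forall>c. (\<Sum>i\<in>I. (\<chi> a b. c i * f i $ a $ b)) = 0 \<longrightarrow> (\<forall>i\<in>I. c i = 0))"

end

theory Submission
  imports Defs
begin

text \<open>
  Write \<open>X = \<Sum>i. |w_i><w_i|\<close> and, for coefficients \<open>c\<close>, \<open>D_c = \<Sum>i j. c_ij |w_i><w_j|\<close>,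
  so that the partial trace of \<open>D_c\<close> is \<open>\<Sum>i j. c_ij W_i W_j\<^sup>\<dagger>\<close>.
  If the operators \<open>W_i W_j\<^sup>\<dagger>\<close> satisfy a nontrivial linear relation, it can be chosen Hermitian,
  and then \<open>X + t D_c\<close> and \<open>X - t D_c\<close> are seeds for small \<open>t > 0\<close>, so \<open>X\<close> is not extreme.
  Conversely, if \<open>X = (1 - u) A + u B\<close> with seeds \<open>A\<close>, \<open>B\<close>, then the kernel of \<open>X\<close> lies in
  that of \<open>A\<close>, so \<open>A = D_c\<close> for some \<open>c\<close>; equality of the partial traces is the relation
  \<open>\<Sum>i j. (c_ij - \<delta>_ij) W_i W_j\<^sup>\<dagger> = 0\<close>, and independence gives \<open>A = X\<close>.
  For the rank bound, a Cholesky-type elimination writes every positive semidefinite \<open>X\<close> as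
  \<open>\<Sum>i<r. |v_i><v_i|\<close> with independent \<open>v_i\<close>, so \<open>rank X \<le> r\<close>, while extremality makes
  \<open>r\<^sup>2\<close> operators independent in the \<open>m\<^sup>2\<close>-dimensional space of \<open>m \<times> m\<close> matrices.
\<close>

section \<open>The complex inner product\<close>

lemma cinner_add_left: "cinner (x + y) z = cinner x z + cinner y z"
  by (simp add: cinner_def distrib_right sum.distrib)

lemma cinner_add_right: "cinner x (y + z) = cinner x y + cinner x z"
  by (simp add: cinner_def distrib_left sum.distrib)

lemma cinner_diff_left: "cinner (x - y) z = cinner x z - cinner y z"
  by (simp add: cinner_def left_diff_distrib sum_subtractf)

lemma cinner_diff_right: "cinner x (y - z) = cinner x y - cinner x z"
  by (simp add: cinner_def right_diff_distrib sum_subtractf)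

lemma cinner_scale_left: "cinner (c *s x) y = cnj c * cinner x y"
  by (simp add: cinner_def sum_distrib_left mult.assoc)

lemma cinner_scale_right: "cinner x (c *s y) = c * cinner x y"
  by (simp add: cinner_def sum_distrib_left mult.left_commute)

lemma cinner_sum_right: "cinner x (sum f S) = (\<Sum>i\<in>S. cinner x (f i))"
  by (simp add: cinner_def sum_distrib_left sum.swap[of _ S])

lemma cinner_sum_left: "cinner (sum f S) y = (\<Sum>i\<in>S. cinner (f i) y)"
  by (simp add: cinner_def sum_distrib_right sum.swap[of _ S])

lemma cinner_zero_left [simp]: "cinner 0 x = 0"
  by (simp add: cinner_def)

lemma cinner_zero_right [simp]: "cinner x 0 = 0"
  by (simp add: cinner_def)

lemma cnj_cinner: "cnj (cinner x y) = cinner y x"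
  by (simp add: cinner_def mult.commute)

lemma cinner_self: "cinner x x = of_real (\<Sum>k\<in>UNIV. (cmod (x $ k))\<^sup>2)"
  unfolding cinner_def of_real_sum
  by (rule sum.cong[OF refl]) (metis complex_norm_square mult.commute)

lemma cinner_self_nonneg: "0 \<le> cinner x x"
  unfolding cinner_self less_eq_complex_def by (simp add: sum_nonneg)

lemma cinner_self_eq_0_iff [simp]: "cinner x x = 0 \<longleftrightarrow> x = 0"
proof
  assume "cinner x x = 0"
  then have "(\<Sum>k\<in>UNIV. (cmod (x $ k))\<^sup>2) = 0"
    unfolding cinner_self of_real_eq_0_iff .
  then show "x = 0"
    by (subst (asm) sum_nonneg_eq_0_iff) (auto simp: vec_eq_iff)
qed simp

lemma cinner_axis_left: "cinner (axis j 1) y = y $ j"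
proof -
  have "cinner (axis j 1) y = (\<Sum>k\<in>UNIV. if k = j then y $ k else 0)"
    unfolding cinner_def by (rule sum.cong) (auto simp: axis_def)
  then show ?thesis by simp
qed

lemma cinner_axis_right: "cinner y (axis j 1) = cnj (y $ j)"
  by (metis cinner_axis_left cnj_cinner)

lemma matrix_vector_mult_sum_left: "sum A S *v x = (\<Sum>i\<in>S. A i *v x)"
  by (simp add: vec_eq_iff matrix_vector_mult_def sum_distrib_right sum.swap[of _ S])

lemma matrix_vector_mult_sum_right:
  fixes A :: "complex^'n^'m"
  shows "A *v sum f S = (\<Sum>i\<in>S. A *v f i)"
  by (simp add: vec_eq_iff matrix_vector_mult_def sum_distrib_left sum.swap[of _ S])

lemma scaleR_matrix_vector_mult: "(t *\<^sub>R A) *v x = of_real t *s (A *v (x :: complex^'n))"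
  by (simp add: vec_eq_iff matrix_vector_mult_def scaleR_conv_of_real[where 'a=complex] sum_distrib_left mult.assoc)

lemma outer_matrix_vector_mult: "outer u v *v x = cinner v x *s u"
  by (simp add: vec_eq_iff matrix_vector_mult_def outer_def cinner_def sum_distrib_left mult_ac)

lemma cinner_adj_left: "cinner (adj A *v x) y = cinner x (A *v y)"
proof -
  have "cinner (adj A *v x) y = (\<Sum>k\<in>UNIV. \<Sum>l\<in>UNIV. cnj (x $ l) * A $ l $ k * y $ k)"
    by (simp add: cinner_def adj_def matrix_vector_mult_def sum_distrib_left sum_distrib_right mult_ac)
  also have "\<dots> = cinner x (A *v y)"
    by (subst sum.swap) (simp add: cinner_def matrix_vector_mult_def sum_distrib_left mult_ac)
  finally show ?thesis .
qed

section \<open>Positive semidefinite matrices\<close>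

lemma psd_quadratic_Im: "psd A \<Longrightarrow> Im (cinner x (A *v x)) = 0"
  unfolding psd_def less_eq_complex_def by (metis zero_complex.sel(2))

lemma psd_quadratic_Re: "psd A \<Longrightarrow> 0 \<le> Re (cinner x (A *v x))"
  unfolding psd_def less_eq_complex_def by (metis zero_complex.sel(1))

lemma psd_cinner_commute:
  assumes "psd A"
  shows "cinner (A *v x) y = cinner x (A *v y)"
proof -
  let ?f = "\<lambda>x y. cinner x (A *v y)"
  \<comment> \<open>Polarization: the imaginary parts of the form at \<open>x + y\<close> and \<open>x + \<i> y\<close> vanish.\<close>
  have "Im (?f (x + y) (x + y)) = 0" "Im (?f (x + \<i> *s y) (x + \<i> *s y)) = 0"
    using psd_quadratic_Im[OF assms] by blast+
  then have "Im (?f x y) + Im (?f y x) = 0" "Re (?f x y) - Re (?f y x) = 0"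
    using psd_quadratic_Im[OF assms, of x] psd_quadratic_Im[OF assms, of y]
    by (simp_all add: cinner_add_left cinner_add_right matrix_vector_right_distrib
        vector_scalar_commute cinner_scale_left cinner_scale_right)
  then have "?f y x = cnj (?f x y)"
    by (simp add: complex_eq_iff)
  then show ?thesis
    by (metis cnj_cinner)
qed

lemma psd_quadratic_eq_0_imp_kernel:
  assumes psd: "psd A" and "cinner y (A *v y) = 0"
  shows "A *v y = 0"
proof (rule ccontr)
  assume "A *v y \<noteq> 0"
  define z where "z = A *v y"
  define N where "N = Re (cinner z z)"
  define Q where "Q = Re (cinner z (A *v z))"
  have "cinner z z \<noteq> 0"
    using \<open>A *v y \<noteq> 0\<close> by (simp add: z_def)
  then have "0 < N"
    using cinner_self_nonneg[of z] unfolding N_def less_eq_complex_def complex_eq_iff by auto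
  have "0 \<le> Q"
    unfolding Q_def by (rule psd_quadratic_Re[OF psd])
  have "cinner y (A *v z) = cinner z z"
    by (simp add: z_def psd_cinner_commute[OF psd])
  \<comment> \<open>Moving from \<open>y\<close> in the direction \<open>- A y\<close> makes the form negative.\<close>
  define s where "s = N / (Q + 1)"
  have "0 < s"
    using \<open>0 < N\<close> \<open>0 \<le> Q\<close> by (simp add: s_def)
  define v where "v = y - of_real s *s z"
  have "cinner v (A *v v) = cinner y (A *v y) - of_real s * cinner y (A *v z)
      - of_real s * cinner z (A *v y) + of_real s * of_real s * cinner z (A *v z)"
    by (simp add: v_def cinner_diff_left cinner_diff_right vector_scalar_commute
        cinner_scale_left cinner_scale_right algebra_simps)
  then have "Re (cinner v (A *v v)) = s * s * Q - 2 * s * N"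
    using assms(2) \<open>cinner y (A *v z) = cinner z z\<close> by (simp add: N_def Q_def z_def)
  moreover have "s * Q < N"
    using \<open>0 < N\<close> \<open>0 \<le> Q\<close> by (simp add: s_def field_simps)
  then have "s * (s * Q) < s * N"
    using \<open>0 < s\<close> by simp
  then have "s * s * Q - 2 * s * N < 0"
    using \<open>0 < s\<close> \<open>0 < N\<close> by (simp add: mult.assoc)
  ultimately show False
    using psd_quadratic_Re[OF psd] by (metis not_le)
qed

lemma cinner_axis_mult_axis: "cinner (axis p 1) (A *v axis q 1) = A $ p $ q"
  by (simp add: cinner_axis_left) (simp add: matrix_vector_mult_def axis_def if_distrib cong: if_cong)

lemma psd_diag_nonneg: "psd A \<Longrightarrow> 0 \<le> A $ p $ p"
  by (metis cinner_axis_mult_axis psd_def)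

lemma psd_entry_cnj: "psd A \<Longrightarrow> A $ p $ q = cnj (A $ q $ p)"
  by (metis cinner_axis_mult_axis cnj_cinner psd_cinner_commute)

lemma psd_diag_eq_0_imp_column_eq_0:
  assumes "psd A" "A $ p $ p = 0"
  shows "A $ q $ p = 0"
proof -
  have "A *v axis p 1 = 0"
    using assms by (metis cinner_axis_mult_axis psd_quadratic_eq_0_imp_kernel)
  then show ?thesis
    by (metis cinner_axis_mult_axis cinner_zero_right)
qed

lemma cinner_outer: "cinner x (outer u u *v x) = of_real ((cmod (cinner u x))\<^sup>2)"
  unfolding outer_matrix_vector_mult cinner_scale_right by (metis cnj_cinner complex_norm_square)

lemma cinner_sum_outer:
  "cinner x ((\<Sum>i\<in>S. outer (v i) (v i)) *v x) = of_real (\<Sum>i\<in>S. (cmod (cinner (v i) x))\<^sup>2)"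
  by (simp add: matrix_vector_mult_sum_left cinner_sum_right cinner_outer)

section \<open>Combinations of outer products\<close>

definition independent_upto :: "(nat \<Rightarrow> complex^'n) \<Rightarrow> nat \<Rightarrow> bool" where
  "independent_upto v r \<longleftrightarrow> (\<forall>a. (\<Sum>i<r. a i *s v i) = 0 \<longrightarrow> (\<forall>i<r. a i = 0))"

lemma independent_uptoD:
  "independent_upto v r \<Longrightarrow> (\<Sum>i<r. a i *s v i) = 0 \<Longrightarrow> i < r \<Longrightarrow> a i = 0"
  unfolding independent_upto_def by blast

lemma sum_cinner_orthogonal:
  fixes w :: "nat \<Rightarrow> complex^'n"
  assumes "\<forall>i<r. \<forall>j<r. i \<noteq> j \<longrightarrow> cinner (w i) (w j) = 0" "k < r"
  shows "(\<Sum>j<r. a j * cinner (w k) (w j)) = a k * cinner (w k) (w k)"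
proof -
  have "(\<Sum>j<r. a j * cinner (w k) (w j)) = (\<Sum>j<r. if j = k then a k * cinner (w k) (w k) else 0)"
    using assms by (intro sum.cong) auto
  then show ?thesis
    using assms(2) by simp
qed

lemma orthogonal_imp_independent_upto:
  assumes "\<forall>i<r. w i \<noteq> 0" "\<forall>i<r. \<forall>j<r. i \<noteq> j \<longrightarrow> cinner (w i) (w j) = 0"
  shows "independent_upto w r"
  unfolding independent_upto_def
proof (intro allI impI)
  fix a i
  assume "(\<Sum>j<r. a j *s w j) = 0" and "i < r"
  then have "0 = cinner (w i) (\<Sum>j<r. a j *s w j)"
    by simp
  also have "\<dots> = (\<Sum>j<r. a j * cinner (w i) (w j))"
    by (simp add: cinner_sum_right cinner_scale_right)
  also have "\<dots> = a i * cinner (w i) (w i)"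
    using assms(2) \<open>i < r\<close> by (rule sum_cinner_orthogonal)
  finally show "a i = 0"
    using assms(1) \<open>i < r\<close> by simp
qed

definition cscale :: "complex \<Rightarrow> complex^'c^'r \<Rightarrow> complex^'c^'r" where
  "cscale a M = (\<chi> i j. a * M $ i $ j)"

lemma cscale_component [simp]: "cscale a M $ i $ j = a * M $ i $ j"
  by (simp add: cscale_def)

lemma cscale_zero [simp]: "cscale a 0 = 0"
  by (simp add: vec_eq_iff)

lemma cscale_zero_left [simp]: "cscale 0 M = 0"
  by (simp add: vec_eq_iff)

lemma cscale_matrix_vector_mult: "cscale a M *v x = a *s (M *v x)"
  by (simp add: vec_eq_iff matrix_vector_mult_def sum_distrib_left mult.assoc)

lemma lin_indep_family_iff_cscale:
  "lin_indep_family f I \<longleftrightarrow> (\<forall>c. (\<Sum>i\<in>I. cscale (c i) (f i)) = 0 \<longrightarrow> (\<forall>i\<in>I. c i = 0))"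
  by (simp add: lin_indep_family_def cscale_def)

lemma lin_indep_familyD:
  "lin_indep_family f I \<Longrightarrow> (\<Sum>i\<in>I. cscale (c i) (f i)) = 0 \<Longrightarrow> i \<in> I \<Longrightarrow> c i = 0"
  unfolding lin_indep_family_iff_cscale by blast

lemma lin_indep_family_cong:
  "(\<And>i. i \<in> I \<Longrightarrow> f i = g i) \<Longrightarrow> lin_indep_family f I \<longleftrightarrow> lin_indep_family g I"
  unfolding lin_indep_family_iff_cscale by (metis (mono_tags, lifting) sum.cong)

definition outer_comb :: "(nat \<Rightarrow> complex^'n) \<Rightarrow> nat \<Rightarrow> (nat \<times> nat \<Rightarrow> complex) \<Rightarrow> complex^'n^'n" where
  "outer_comb v r c = (\<Sum>i<r. \<Sum>j<r. cscale (c (i, j)) (outer (v i) (v j)))"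

lemma outer_comb_component:
  "outer_comb v r c $ p $ q = (\<Sum>i<r. \<Sum>j<r. c (i, j) * (v i $ p * cnj (v j $ q)))"
  by (simp add: outer_comb_def outer_def)

lemma outer_comb_mult_vector:
  "outer_comb v r c *v x = (\<Sum>i<r. (\<Sum>j<r. c (i, j) * cinner (v j) x) *s v i)"
  by (simp add: outer_comb_def matrix_vector_mult_sum_left cscale_matrix_vector_mult
      outer_matrix_vector_mult vec.scale_sum_left)

lemma cinner_outer_comb:
  "cinner x (outer_comb v r c *v x) = (\<Sum>i<r. \<Sum>j<r. c (i, j) * (cnj (cinner (v i) x) * cinner (v j) x))"
  by (simp add: outer_comb_mult_vector cinner_sum_right cinner_scale_right cnj_cinner
      sum_distrib_left mult_ac)

lemma outer_comb_delta: "outer_comb v r (\<lambda>(i, j). if i = j then 1 else 0) = (\<Sum>i<r. outer (v i) (v i))"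
  unfolding outer_comb_def
  by (intro sum.cong refl) (simp add: vec_eq_iff if_distrib[of "\<lambda>z. z * _"] cong: if_cong)

lemma outer_comb_cong:
  "(\<And>i j. i < r \<Longrightarrow> j < r \<Longrightarrow> c (i, j) = d (i, j)) \<Longrightarrow> outer_comb v r c = outer_comb v r d"
  unfolding outer_comb_def by (intro sum.cong refl) auto

lemma outer_comb_add: "outer_comb v r (\<lambda>p. c p + d p) = outer_comb v r c + outer_comb v r d"
  by (simp add: vec_eq_iff outer_comb_component distrib_right sum.distrib)

lemma outer_comb_diff: "outer_comb v r (\<lambda>p. c p - d p) = outer_comb v r c - outer_comb v r d"
  by (simp add: vec_eq_iff outer_comb_component left_diff_distrib sum_subtractf)

lemma outer_comb_mult: "outer_comb v r (\<lambda>p. a * c p) = cscale a (outer_comb v r c)"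
  by (simp add: vec_eq_iff outer_comb_component sum_distrib_left mult.assoc)

lemma adj_outer_comb: "adj (outer_comb v r c) = outer_comb v r (\<lambda>(i, j). cnj (c (j, i)))"
proof -
  have "adj (outer_comb v r c) $ p $ q = outer_comb v r (\<lambda>(i, j). cnj (c (j, i))) $ p $ q" for p q
    unfolding adj_def outer_comb_component
    by (simp add: mult_ac) (rule sum.swap)
  then show ?thesis
    by (simp add: vec_eq_iff)
qed

lemma outer_comb_eq_0_imp:
  assumes "independent_upto v r" "outer_comb v r c = 0" "i < r" "j < r"
  shows "c (i, j) = 0"
proof -
  define u where "u = (\<Sum>j<r. cnj (c (i, j)) *s v j)"
  have "(\<Sum>j<r. c (i, j) * cinner (v j) x) = 0" for x
  proof -
    have "(\<Sum>i<r. (\<Sum>j<r. c (i, j) * cinner (v j) x) *s v i) = 0"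
      using outer_comb_mult_vector[of v r c x] assms(2) by simp
    from independent_uptoD[OF assms(1) this assms(3)] show ?thesis .
  qed
  then have "cinner u u = 0"
    by (simp add: u_def cinner_sum_left cinner_scale_left)
  then have "(\<Sum>j<r. cnj (c (i, j)) *s v j) = 0"
    by (simp add: u_def)
  from independent_uptoD[OF assms(1) this assms(4)] show ?thesis
    by simp
qed

lemma cinner_outer_comb_Im:
  assumes "\<forall>i j. c (j, i) = cnj (c (i, j))"
  shows "Im (cinner x (outer_comb v r c *v x)) = 0"
proof -
  let ?D = "outer_comb v r c"
  have "adj ?D = ?D"
    unfolding adj_outer_comb
  proof (rule outer_comb_cong)
    fix i j
    show "(\<lambda>(i, j). cnj (c (j, i))) (i, j) = c (i, j)"
      using assms[rule_format, of j i] by simp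
  qed
  then have "cnj (cinner x (?D *v x)) = cinner x (?D *v x)"
    using cinner_adj_left[of ?D x x] by (simp add: cnj_cinner)
  then show ?thesis
    by (simp add: complex_eq_iff)
qed

lemma cmod_cinner_outer_comb_le:
  "cmod (cinner x (outer_comb v r c *v x))
     \<le> (\<Sum>i<r. \<Sum>j<r. cmod (c (i, j))) * (\<Sum>i<r. (cmod (cinner (v i) x))\<^sup>2)"
proof -
  let ?u = "\<lambda>i. cinner (v i) x"
  define S where "S = (\<Sum>i<r. (cmod (?u i))\<^sup>2)"
  have "0 \<le> S"
    unfolding S_def by (simp add: sum_nonneg)
  have usq: "(cmod (?u i))\<^sup>2 \<le> S" if "i < r" for i
    unfolding S_def using that by (intro member_le_sum) auto
  have uu: "cmod (?u i) * cmod (?u j) \<le> S" if "i < r" "j < r" for i j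
  proof (rule power2_le_imp_le)
    have "(cmod (?u i) * cmod (?u j))\<^sup>2 = (cmod (?u i))\<^sup>2 * (cmod (?u j))\<^sup>2"
      by (simp add: power_mult_distrib)
    also have "\<dots> \<le> S * S"
      using usq[OF that(1)] usq[OF that(2)] \<open>0 \<le> S\<close> by (intro mult_mono) auto
    finally show "(cmod (?u i) * cmod (?u j))\<^sup>2 \<le> S\<^sup>2"
      by (simp add: power2_eq_square)
  qed (rule \<open>0 \<le> S\<close>)
  have "cmod (cinner x (outer_comb v r c *v x))
      \<le> (\<Sum>i<r. \<Sum>j<r. cmod (c (i, j) * (cnj (?u i) * ?u j)))"
    unfolding cinner_outer_comb by (intro order.trans[OF norm_sum] sum_mono norm_sum)
  also have "\<dots> \<le> (\<Sum>i<r. \<Sum>j<r. cmod (c (i, j)) * S)"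
    using uu by (intro sum_mono) (auto simp: norm_mult intro!: mult_left_mono)
  finally show ?thesis
    by (simp add: S_def sum_distrib_right)
qed

lemma psd_sum_outer_add_outer_comb:
  fixes v :: "nat \<Rightarrow> complex^'n"
  assumes herm: "\<forall>i j. c (j, i) = cnj (c (i, j))"
    and small: "\<bar>t\<bar> * (\<Sum>i<r. \<Sum>j<r. cmod (c (i, j))) \<le> 1"
  shows "psd ((\<Sum>i<r. outer (v i) (v i)) + t *\<^sub>R outer_comb v r c)"
  unfolding psd_def
proof
  fix x :: "complex^'n"
  define S where "S = (\<Sum>i<r. (cmod (cinner (v i) x))\<^sup>2)"
  define q where "q = cinner x (outer_comb v r c *v x)"
  have "0 \<le> S"
    unfolding S_def by (simp add: sum_nonneg)
  have "\<bar>t * Re q\<bar> \<le> \<bar>t\<bar> * ((\<Sum>i<r. \<Sum>j<r. cmod (c (i, j))) * S)"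
    using cmod_cinner_outer_comb_le[of x v r c] abs_Re_le_cmod[of q]
    unfolding q_def S_def by (simp add: abs_mult mult_left_mono)
  also have "\<dots> \<le> S"
    using mult_right_mono[OF small \<open>0 \<le> S\<close>] by (simp add: mult.assoc)
  finally have "0 \<le> S + t * Re q"
    by linarith
  moreover have "Im q = 0"
    unfolding q_def by (rule cinner_outer_comb_Im[OF herm])
  moreover have "cinner x (((\<Sum>i<r. outer (v i) (v i)) + t *\<^sub>R outer_comb v r c) *v x)
      = of_real S + of_real t * q"
    by (simp add: q_def S_def matrix_vector_mult_add_rdistrib scaleR_matrix_vector_mult
        cinner_add_right cinner_scale_right cinner_sum_outer)
  ultimately show "0 \<le> cinner x (((\<Sum>i<r. outer (v i) (v i)) + t *\<^sub>R outer_comb v r c) *v x)"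
    by (simp add: less_eq_complex_def)
qed

section \<open>Partial traces\<close>

lemma ptrace_h_add: "ptrace_h (X + Y) = ptrace_h X + ptrace_h Y"
  by (simp add: vec_eq_iff ptrace_h_def sum.distrib)

lemma ptrace_h_diff: "ptrace_h (X - Y) = ptrace_h X - ptrace_h Y"
  by (simp add: vec_eq_iff ptrace_h_def sum_subtractf)

lemma ptrace_h_scaleR: "ptrace_h (t *\<^sub>R X) = t *\<^sub>R ptrace_h X"
  by (simp add: vec_eq_iff ptrace_h_def scaleR_sum_right)

lemma ptrace_h_cscale: "ptrace_h (cscale a X) = cscale a (ptrace_h X)"
  by (simp add: vec_eq_iff ptrace_h_def sum_distrib_left)

lemma ptrace_h_adj: "ptrace_h (adj X) = adj (ptrace_h X)"
  by (simp add: vec_eq_iff ptrace_h_def adj_def)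

lemma ptrace_h_sum: "ptrace_h (sum f S) = (\<Sum>i\<in>S. ptrace_h (f i))"
  by (simp add: vec_eq_iff ptrace_h_def sum.swap[of _ S])

lemma ptrace_h_outer_comb:
  "ptrace_h (outer_comb v r c) = (\<Sum>i<r. \<Sum>j<r. cscale (c (i, j)) (ptrace_h (outer (v i) (v j))))"
  by (simp add: outer_comb_def ptrace_h_sum ptrace_h_cscale)

lemma lin_indep_family_ptrace_outer_iff:
  "lin_indep_family (\<lambda>(i, j). ptrace_h (outer (v i) (v j))) ({..<r} \<times> {..<r}) \<longleftrightarrow>
     (\<forall>c. ptrace_h (outer_comb v r c) = 0 \<longrightarrow> (\<forall>i<r. \<forall>j<r. c (i, j) = 0))"
proof -
  have "(\<Sum>p\<in>{..<r} \<times> {..<r}. cscale (c p) ((\<lambda>(i, j). ptrace_h (outer (v i) (v j))) p))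
      = ptrace_h (outer_comb v r c)" for c
    by (simp add: ptrace_h_outer_comb sum.cartesian_product')
  then show ?thesis
    unfolding lin_indep_family_iff_cscale by auto
qed

lemma hermitian_relation:
  fixes v :: "nat \<Rightarrow> complex^('d::finite \<times> 'm::finite)"
  assumes rel: "ptrace_h (outer_comb v r c) = 0" and "c (k, l) \<noteq> 0"
  obtains h where "ptrace_h (outer_comb v r h) = 0" "\<forall>i j. h (j, i) = cnj (h (i, j))" "h (k, l) \<noteq> 0"
proof -
  define c' where "c' = (\<lambda>(i, j). cnj (c (j, i)))"
  have rel': "ptrace_h (outer_comb v r c') = 0"
    unfolding c'_def adj_outer_comb[symmetric] ptrace_h_adj rel by (simp add: adj_def vec_eq_iff)
  define h1 where "h1 p = c p + c' p" for p
  define h2 where "h2 p = \<i> * (c p - c' p)" for p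
  have "ptrace_h (outer_comb v r h1) = 0"
    unfolding h1_def outer_comb_add ptrace_h_add rel rel' by simp
  moreover have "ptrace_h (outer_comb v r h2) = 0"
    unfolding h2_def outer_comb_mult outer_comb_diff ptrace_h_cscale ptrace_h_diff rel rel' by simp
  moreover have "\<forall>i j. h1 (j, i) = cnj (h1 (i, j))"
    by (simp add: h1_def c'_def add.commute)
  moreover have "\<forall>i j. h2 (j, i) = cnj (h2 (i, j))"
    by (simp add: h2_def c'_def right_diff_distrib)
  moreover have "h1 (k, l) - \<i> * h2 (k, l) = 2 * c (k, l)"
    by (simp add: h1_def h2_def algebra_simps)
  then have "h1 (k, l) \<noteq> 0 \<or> h2 (k, l) \<noteq> 0"
    using assms(2) by auto
  ultimately show thesis
    using that by blast
qed

section \<open>Extreme seeds\<close>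

lemma not_extreme_point_of_midpoint:
  assumes "x + d \<in> S" "x - d \<in> S" "d \<noteq> 0"
  shows "\<not> x extreme_point_of S"
proof -
  have "midpoint (x + d) (x - d) = x"
    by (simp add: midpoint_def scaleR_right_distrib flip: scaleR_2)
  moreover have "x + d \<noteq> x - d"
    using assms(3) by (simp add: eq_neg_iff_add_eq_0 flip: scaleR_2)
  ultimately show ?thesis
    using assms midpoint_in_open_segment unfolding extreme_point_of_def by metis
qed

lemma seeds_add_traceless:
  assumes "X \<in> seeds" "psd (X + E)" "ptrace_h E = 0"
  shows "X + E \<in> seeds"
  using assms by (simp add: seeds_def ptrace_h_add)

lemma extreme_seed_imp_lin_indep:
  fixes v :: "nat \<Rightarrow> complex^('d::finite \<times> 'm::finite)"
  assumes indep: "independent_upto v r"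
    and X: "X = (\<Sum>i<r. outer (v i) (v i))"
    and ext: "X extreme_point_of seeds"
  shows "lin_indep_family (\<lambda>(i, j). ptrace_h (outer (v i) (v j))) ({..<r} \<times> {..<r})"
  unfolding lin_indep_family_ptrace_outer_iff
proof (rule allI, rule impI)
  fix c
  assume rel: "ptrace_h (outer_comb v r c) = 0"
  show "\<forall>i<r. \<forall>j<r. c (i, j) = 0"
  proof (rule ccontr)
    assume "\<not> (\<forall>i<r. \<forall>j<r. c (i, j) = 0)"
    then obtain k l where kl: "k < r" "l < r" "c (k, l) \<noteq> 0"
      by blast
    obtain h where relh: "ptrace_h (outer_comb v r h) = 0"
      and herm: "\<forall>i j. h (j, i) = cnj (h (i, j))" and "h (k, l) \<noteq> 0"
      using hermitian_relation[OF rel kl(3)] by blast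
    define D where "D = outer_comb v r h"
    define C where "C = (\<Sum>i<r. \<Sum>j<r. cmod (h (i, j)))"
    define t where "t = 1 / (C + 1)"
    have "0 \<le> C"
      unfolding C_def by (simp add: sum_nonneg)
    then have "0 < t" "\<bar>t\<bar> * C \<le> 1" "\<bar>-t\<bar> * C \<le> 1"
      by (simp_all add: t_def field_simps)
    have "D \<noteq> 0"
      using outer_comb_eq_0_imp[OF indep _ kl(1,2)] \<open>h (k, l) \<noteq> 0\<close> unfolding D_def by blast
    then have "t *\<^sub>R D \<noteq> 0"
      using \<open>0 < t\<close> by simp
    have Xs: "X \<in> seeds"
      using ext unfolding extreme_point_of_def by blast
    have "X + s *\<^sub>R D \<in> seeds" if "\<bar>s\<bar> * C \<le> 1" for s
      using seeds_add_traceless[OF Xs] psd_sum_outer_add_outer_comb[OF herm, where t = s and v = v] that relh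
      by (simp add: X D_def C_def ptrace_h_scaleR)
    from this[OF \<open>\<bar>t\<bar> * C \<le> 1\<close>] this[OF \<open>\<bar>-t\<bar> * C \<le> 1\<close>]
    have "X + t *\<^sub>R D \<in> seeds" "X - t *\<^sub>R D \<in> seeds"
      by simp_all
    then show False
      using not_extreme_point_of_midpoint \<open>t *\<^sub>R D \<noteq> 0\<close> ext by blast
  qed
qed

lemma psd_convex_comb_kernel:
  fixes A B :: "complex^'n^'n"
  assumes "psd A" "psd B" "0 \<le> u" "u < 1" "X = (1 - u) *\<^sub>R A + u *\<^sub>R B" "X *v y = 0"
  shows "A *v y = 0"
proof -
  have "0 = Re (cinner y (X *v y))"
    using assms(6) by simp
  also have "\<dots> = (1 - u) * Re (cinner y (A *v y)) + u * Re (cinner y (B *v y))"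
    unfolding assms(5) matrix_vector_mult_add_rdistrib scaleR_matrix_vector_mult
      cinner_add_right cinner_scale_right by simp
  finally have "(1 - u) * Re (cinner y (A *v y)) = 0"
    using mult_nonneg_nonneg[of "1 - u" "Re (cinner y (A *v y))"]
      mult_nonneg_nonneg[of u "Re (cinner y (B *v y))"]
      psd_quadratic_Re[OF assms(1), of y] psd_quadratic_Re[OF assms(2), of y] assms(3,4)
    by linarith
  then have "cinner y (A *v y) = 0"
    using assms(4) psd_quadratic_Im[OF assms(1), of y] by (simp add: complex_eq_iff)
  then show ?thesis
    by (rule psd_quadratic_eq_0_imp_kernel[OF assms(1)])
qed

definition orth_proj :: "(nat \<Rightarrow> complex^'n) \<Rightarrow> nat \<Rightarrow> complex^'n \<Rightarrow> complex^'n" where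
  "orth_proj w r x = (\<Sum>i<r. (cinner (w i) x / cinner (w i) (w i)) *s w i)"

lemma cinner_diff_orth_proj:
  assumes "\<forall>i<r. w i \<noteq> 0" "\<forall>i<r. \<forall>j<r. i \<noteq> j \<longrightarrow> cinner (w i) (w j) = 0" "k < r"
  shows "cinner (w k) (x - orth_proj w r x) = 0"
proof -
  have "cinner (w k) (orth_proj w r x) = (\<Sum>i<r. (cinner (w i) x / cinner (w i) (w i)) * cinner (w k) (w i))"
    by (simp add: orth_proj_def cinner_sum_right cinner_scale_right)
  also have "\<dots> = (cinner (w k) x / cinner (w k) (w k)) * cinner (w k) (w k)"
    using assms(2,3) by (rule sum_cinner_orthogonal)
  finally show ?thesis
    using assms(1,3) by (simp add: cinner_diff_right)
qed

lemma mult_orth_proj_eq: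
  assumes "\<forall>i<r. w i \<noteq> 0" "\<forall>i<r. \<forall>j<r. i \<noteq> j \<longrightarrow> cinner (w i) (w j) = 0"
    and ker: "\<And>y. \<forall>i<r. cinner (w i) y = 0 \<Longrightarrow> A *v y = 0"
  shows "A *v orth_proj w r x = A *v x"
  using ker[of "x - orth_proj w r x"] cinner_diff_orth_proj[OF assms(1,2)]
  by (simp add: matrix_vector_mult_diff_distrib)

lemma orth_proj_mult_eq:
  assumes nz: "\<forall>i<r. w i \<noteq> 0" and orth: "\<forall>i<r. \<forall>j<r. i \<noteq> j \<longrightarrow> cinner (w i) (w j) = 0"
    and psd: "psd A" and ker: "\<And>y. \<forall>i<r. cinner (w i) y = 0 \<Longrightarrow> A *v y = 0"
  shows "orth_proj w r (A *v z) = A *v z"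
proof -
  \<comment> \<open>The range of the Hermitian \<open>A\<close> is orthogonal to its kernel, which contains \<open>y\<close>.\<close>
  define y where "y = A *v z - orth_proj w r (A *v z)"
  have perp: "cinner (w i) y = 0" if "i < r" for i
    unfolding y_def using cinner_diff_orth_proj[OF nz orth that] .
  then have "cinner y (A *v z) = 0"
    using ker psd_cinner_commute[OF psd, of y z] by simp
  moreover have "cinner y (w i) = 0" if "i < r" for i
    using perp[OF that] by (metis cnj_cinner complex_cnj_zero)
  then have "cinner y (orth_proj w r (A *v z)) = 0"
    by (simp add: orth_proj_def cinner_sum_right cinner_scale_right)
  ultimately have "cinner y y = 0"
    by (simp add: y_def cinner_diff_right)
  then show ?thesis
    by (simp add: y_def)
qed

lemma psd_eq_outer_comb_if_kernel:
  fixes w :: "nat \<Rightarrow> complex^'n"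
  assumes nz: "\<forall>i<r. w i \<noteq> 0"
    and orth: "\<forall>i<r. \<forall>j<r. i \<noteq> j \<longrightarrow> cinner (w i) (w j) = 0"
    and psd: "psd A"
    and ker: "\<And>y. \<forall>i<r. cinner (w i) y = 0 \<Longrightarrow> A *v y = 0"
  shows "A = outer_comb w r
           (\<lambda>(i, j). cinner (w i) (A *v w j) / (cinner (w i) (w i) * cinner (w j) (w j)))"
proof (rule matrix_eq[THEN iffD2], rule allI)
  fix x
  let ?n = "\<lambda>i. cinner (w i) (w i)"
  have "A *v x = (\<Sum>j<r. (cinner (w j) x / ?n j) *s (A *v w j))"
    using mult_orth_proj_eq[OF nz orth ker, of x]
    by (simp add: orth_proj_def matrix_vector_mult_sum_right vector_scalar_commute)
  also have "\<dots> = (\<Sum>j<r. (cinner (w j) x / ?n j) *s orth_proj w r (A *v w j))"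
    using orth_proj_mult_eq[OF nz orth psd ker] by simp
  also have "\<dots> = (\<Sum>j<r. \<Sum>i<r. (cinner (w j) x / ?n j * (cinner (w i) (A *v w j) / ?n i)) *s w i)"
    by (simp add: orth_proj_def vec.scale_sum_right)
  also have "\<dots> = (\<Sum>i<r. \<Sum>j<r. (cinner (w j) x / ?n j * (cinner (w i) (A *v w j) / ?n i)) *s w i)"
    by (rule sum.swap)
  also have "\<dots> = (\<Sum>i<r. (\<Sum>j<r. cinner (w i) (A *v w j) / (?n i * ?n j) * cinner (w j) x) *s w i)"
    by (simp add: vec.scale_sum_left mult.commute)
  finally show "A *v x = outer_comb w r (\<lambda>(i, j). cinner (w i) (A *v w j) / (?n i * ?n j)) *v x"
    by (simp add: outer_comb_mult_vector)
qed

lemma seed_eq_of_convex_comb: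
  fixes w :: "nat \<Rightarrow> complex^('d::finite \<times> 'm::finite)"
  assumes nz: "\<forall>i<r. w i \<noteq> 0"
    and orth: "\<forall>i<r. \<forall>j<r. i \<noteq> j \<longrightarrow> cinner (w i) (w j) = 0"
    and X: "X = (\<Sum>i<r. outer (w i) (w i))"
    and indep: "lin_indep_family (\<lambda>(i, j). ptrace_h (outer (w i) (w j))) ({..<r} \<times> {..<r})"
    and seeds: "X \<in> seeds" "A \<in> seeds" "psd B"
    and u: "0 \<le> u" "u < 1" "X = (1 - u) *\<^sub>R A + u *\<^sub>R B"
  shows "A = X"
proof -
  define \<delta> where "\<delta> = (\<lambda>(i::nat, j::nat). if i = j then (1::complex) else 0)"
  define c where "c = (\<lambda>(i, j). cinner (w i) (A *v w j) / (cinner (w i) (w i) * cinner (w j) (w j)))"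
  have "psd A"
    using seeds(2) by (simp add: seeds_def)
  have "X *v y = 0" if "\<forall>i<r. cinner (w i) y = 0" for y
    using that by (simp add: X matrix_vector_mult_sum_left outer_matrix_vector_mult)
  then have A: "A = outer_comb w r c"
    unfolding c_def using psd_convex_comb_kernel[OF \<open>psd A\<close> seeds(3) u]
    by (intro psd_eq_outer_comb_if_kernel[OF nz orth \<open>psd A\<close>]) blast
  have X': "X = outer_comb w r \<delta>"
    unfolding X \<delta>_def by (rule outer_comb_delta[symmetric])
  have "ptrace_h A = ptrace_h X"
    using seeds(1,2) by (simp add: seeds_def)
  then have "ptrace_h (outer_comb w r (\<lambda>p. c p - \<delta> p)) = 0"
    unfolding outer_comb_diff ptrace_h_diff A X' by simp
  then have "c (i, j) = \<delta> (i, j)" if "i < r" "j < r" for i j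
    using indep that unfolding lin_indep_family_ptrace_outer_iff by auto
  then show ?thesis
    unfolding A X' by (rule outer_comb_cong)
qed

lemma lin_indep_imp_extreme_seed:
  fixes w :: "nat \<Rightarrow> complex^('d::finite \<times> 'm::finite)"
  assumes nz: "\<forall>i<r. w i \<noteq> 0"
    and orth: "\<forall>i<r. \<forall>j<r. i \<noteq> j \<longrightarrow> cinner (w i) (w j) = 0"
    and X: "X = (\<Sum>i<r. outer (w i) (w i))"
    and indep: "lin_indep_family (\<lambda>(i, j). ptrace_h (outer (w i) (w j))) ({..<r} \<times> {..<r})"
    and "X \<in> seeds"
  shows "X extreme_point_of seeds"
  unfolding extreme_point_of_def
proof (intro conjI ballI notI \<open>X \<in> seeds\<close>)
  fix A B
  assume "A \<in> seeds" "B \<in> seeds" "X \<in> open_segment A B"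
  then obtain u where "A \<noteq> B" "0 < u" "u < 1" "X = (1 - u) *\<^sub>R A + u *\<^sub>R B"
    unfolding in_segment by blast
  moreover have "psd A" "psd B"
    using \<open>A \<in> seeds\<close> \<open>B \<in> seeds\<close> by (simp_all add: seeds_def)
  ultimately have "A = X" "B = X"
    using seed_eq_of_convex_comb[OF nz orth X indep \<open>X \<in> seeds\<close>, of A B u]
      seed_eq_of_convex_comb[OF nz orth X indep \<open>X \<in> seeds\<close>, of B A "1 - u"]
      \<open>A \<in> seeds\<close> \<open>B \<in> seeds\<close> by (simp_all add: add.commute)
  then show False
    using \<open>A \<noteq> B\<close> by simp
qed

section \<open>The rank bound\<close>

lemma rank_sum_outer_le:
  fixes v :: "nat \<Rightarrow> complex^'n"
  shows "rank (\<Sum>i<r. outer (v i) (v i)) \<le> r"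
proof -
  define cv where "cv i = (\<chi> q. cnj (v i $ q))" for i
  have "rows (\<Sum>i<r. outer (v i) (v i)) \<subseteq> vec.span (cv ` {..<r})"
  proof
    fix y
    assume "y \<in> rows (\<Sum>i<r. outer (v i) (v i))"
    then obtain p where "y = row p (\<Sum>i<r. outer (v i) (v i))"
      unfolding rows_def by blast
    then have "y = (\<Sum>i<r. (v i $ p) *s cv i)"
      by (simp add: vec_eq_iff row_def cv_def outer_def)
    also have "\<dots> \<in> vec.span (cv ` {..<r})"
      by (intro vec.span_sum vec.span_scale vec.span_base) auto
    finally show "y \<in> vec.span (cv ` {..<r})" .
  qed
  then have "vec.dim (rows (\<Sum>i<r. outer (v i) (v i))) \<le> card (cv ` {..<r})"
    by (intro vec.dim_le_card) auto
  also have "\<dots> \<le> r"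
    using card_image_le[of "{..<r}" cv] by simp
  finally show ?thesis
    unfolding row_rank_def_gen .
qed

lemma lin_indep_family_inj_on:
  assumes "lin_indep_family f I" "finite I"
  shows "inj_on f I"
proof (rule inj_onI, rule ccontr)
  fix p q
  assume "p \<in> I" "q \<in> I" "f p = f q" "p \<noteq> q"
  define c where "c x = (if x = p then 1 else if x = q then -1 else (0::complex))" for x
  have "(\<Sum>x\<in>I. cscale (c x) (f x)) = cscale 1 (f p) + cscale (-1) (f q)"
    using \<open>p \<in> I\<close> \<open>q \<in> I\<close> \<open>p \<noteq> q\<close> assms(2)
    by (simp add: c_def if_distrib[of "\<lambda>a. cscale a _"] sum.If_cases Int_absorb1 Diff_eq)
  also have "\<dots> = 0"
    using \<open>f p = f q\<close> by (simp add: vec_eq_iff)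
  finally have "(\<Sum>x\<in>I. cscale (c x) (f x)) = 0" .
  from lin_indep_familyD[OF assms(1) this \<open>p \<in> I\<close>] show False
    by (simp add: c_def)
qed

lemma lin_indep_family_card_le:
  fixes f :: "'i \<Rightarrow> complex^'c::finite^'r::finite"
  assumes indep: "lin_indep_family f I" and "finite I"
  shows "card I \<le> CARD('r) * CARD('c)"
proof -
  define flat :: "complex^'c^'r \<Rightarrow> complex^('r \<times> 'c)" where "flat M = (\<chi> p. M $ fst p $ snd p)" for M
  have flat_component: "flat M $ (a, b) = M $ a $ b" for M a b
    by (simp add: flat_def)
  have "inj flat"
    by (rule injI) (metis flat_component vec_eq_iff)
  then have inj: "inj_on (flat \<circ> f) I"
    using lin_indep_family_inj_on[OF assms] by (simp add: comp_inj_on inj_on_subset)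
  have "vec.independent ((flat \<circ> f) ` I)"
  proof (rule vec.independent_if_scalars_zero)
    fix g y
    assume "(\<Sum>x\<in>(flat \<circ> f) ` I. g x *s x) = 0" "y \<in> (flat \<circ> f) ` I"
    then obtain x where "x \<in> I" "y = flat (f x)" and "(\<Sum>x\<in>I. g (flat (f x)) *s flat (f x)) = 0"
      unfolding sum.reindex[OF inj] by auto
    then have "(\<Sum>x\<in>I. cscale (g (flat (f x))) (f x)) = 0"
      by (simp add: vec_eq_iff flat_component)
    from lin_indep_familyD[OF indep this \<open>x \<in> I\<close>] show "g y = 0"
      using \<open>y = flat (f x)\<close> by simp
  qed (use \<open>finite I\<close> in simp)
  then have "card ((flat \<circ> f) ` I) \<le> CARD('r \<times> 'c)"
    by (metis vec.independent_bound_general dim_subset_UNIV_cart_gen order.trans)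
  then show ?thesis
    using card_image[OF inj] by (simp add: comp_def)
qed

lemma psd_diff_outer_column:
  fixes X :: "complex^'n^'n"
  assumes psd: "psd X" and d: "X $ e $ e = of_real d" "0 < d"
  defines "v \<equiv> (\<chi> p. X $ p $ e / of_real (sqrt d))"
  shows "psd (X - outer v v)"
  unfolding psd_def
proof
  fix x :: "complex^'n"
  define p0 where "p0 = (X *v x) $ e"
  define y where "y = x - (p0 / of_real d) *s axis e 1"
  have "cinner v x = (\<Sum>p\<in>UNIV. X $ e $ p * x $ p) / of_real (sqrt d)"
    unfolding v_def cinner_def
    by (simp add: sum_divide_distrib psd_entry_cnj[OF psd, of e])
  then have "cinner v x = p0 / of_real (sqrt d)"
    by (simp add: p0_def matrix_vector_mult_def)
  moreover have "cinner x v = cnj (cinner v x)"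
    by (simp add: cnj_cinner)
  ultimately have "cinner x ((X - outer v v) *v x) = cinner x (X *v x) - p0 * cnj p0 / of_real d"
    using d(2) by (simp add: matrix_vector_mult_diff_rdistrib outer_matrix_vector_mult
        cinner_diff_right cinner_scale_right flip: of_real_mult)
  \<comment> \<open>Completing the square in the direction of the basis vector \<open>e\<close>.\<close>
  also have "\<dots> = cinner y (X *v y)"
  proof -
    have "cinner (axis e 1) (X *v x) = p0"
      by (simp add: p0_def cinner_axis_left)
    moreover have "cinner x (X *v axis e 1) = cnj p0"
      using psd_cinner_commute[OF psd, of x "axis e 1"] by (simp add: p0_def cinner_axis_right)
    moreover have "cinner (axis e 1) (X *v axis e 1) = of_real d"
      by (simp only: cinner_axis_mult_axis d(1))
    ultimately show ?thesis
      using d(2) by (simp add: y_def cinner_diff_left cinner_diff_right matrix_vector_mult_diff_distrib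
          vector_scalar_commute cinner_scale_left cinner_scale_right field_simps)
  qed
  finally show "0 \<le> cinner x ((X - outer v v) *v x)"
    using psd unfolding psd_def by simp
qed

lemma psd_split_off_outer:
  fixes X :: "complex^'n^'n"
  assumes psd: "psd X" and "X $ e $ e \<noteq> 0"
  obtains v where "psd (X - outer v v)" "v $ e \<noteq> 0"
    "{p. (X - outer v v) $ p $ p \<noteq> 0} \<subseteq> {p. X $ p $ p \<noteq> 0} - {e}"
proof -
  define d where "d = Re (X $ e $ e)"
  have Xee: "X $ e $ e = of_real d" and "0 \<le> d"
    using psd_diag_nonneg[OF psd, of e] by (auto simp: d_def less_eq_complex_def complex_eq_iff)
  then have "0 < d"
    using assms(2) by force
  define v where "v = (\<chi> p. X $ p $ e / of_real (sqrt d))"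
  have "psd (X - outer v v)"
    unfolding v_def by (rule psd_diff_outer_column[OF psd Xee \<open>0 < d\<close>])
  have "v $ e * cnj (v $ e) = X $ e $ e"
    using \<open>0 < d\<close> by (simp add: v_def Xee field_simps flip: of_real_mult of_real_divide)
  then have "v $ e \<noteq> 0"
    using assms(2) by auto
  have "X $ p $ p \<noteq> 0 \<and> p \<noteq> e" if "(X - outer v v) $ p $ p \<noteq> 0" for p
  proof
    show "X $ p $ p \<noteq> 0"
    proof
      assume "X $ p $ p = 0"
      then have "X $ p $ e = 0"
        using psd_diag_eq_0_imp_column_eq_0[OF psd, of p e] psd_entry_cnj[OF psd, of p e] by simp
      then show False
        using that \<open>X $ p $ p = 0\<close> by (simp add: v_def outer_def)
    qed
    show "p \<noteq> e"
      using that \<open>v $ e * cnj (v $ e) = X $ e $ e\<close> by (auto simp: outer_def)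
  qed
  then show thesis
    using that \<open>psd (X - outer v v)\<close> \<open>v $ e \<noteq> 0\<close> by blast
qed

lemma sum_outer_diag_eq_0_imp:
  fixes v :: "nat \<Rightarrow> complex^'n"
  assumes "(\<Sum>i<r. outer (v i) (v i)) $ p $ p = 0" "i < r"
  shows "v i $ p = 0"
proof -
  have "(\<Sum>i<r. (cmod (cinner (v i) (axis p 1)))\<^sup>2) = 0"
    using assms(1) cinner_sum_outer[of "axis p 1" v "{..<r}"]
    by (simp only: cinner_axis_mult_axis) (metis of_real_eq_0_iff)
  then have "cmod (cinner (v i) (axis p 1)) = 0"
    using assms(2) by (simp add: sum_nonneg_eq_0_iff)
  then show ?thesis
    by (simp add: cinner_axis_right)
qed

lemma independent_upto_fun_upd:
  assumes "independent_upto v r" "\<forall>i<r. v i $ e = 0" "u $ e \<noteq> 0"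
  shows "independent_upto (v(r := u)) (Suc r)"
  unfolding independent_upto_def
proof (intro allI impI)
  fix a i
  assume "(\<Sum>i<Suc r. a i *s (v(r := u)) i) = 0" "i < Suc r"
  moreover have "(\<Sum>i<r. a i *s (v(r := u)) i) = (\<Sum>i<r. a i *s v i)"
    by (intro sum.cong) auto
  ultimately have sum0: "(\<Sum>i<r. a i *s v i) + a r *s u = 0"
    by simp
  then have "((\<Sum>i<r. a i *s v i) + a r *s u) $ e = 0"
    by simp
  then have "a r * u $ e = 0"
    using assms(2) by simp
  then have "a r = 0"
    using assms(3) by simp
  with sum0 have "\<forall>i<r. a i = 0"
    using assms(1) unfolding independent_upto_def by simp
  with \<open>a r = 0\<close> \<open>i < Suc r\<close> show "a i = 0"
    using less_Suc_eq by auto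
qed

lemma psd_eq_sum_outer_independent:
  fixes X :: "complex^'n^'n"
  assumes "psd X"
  shows "\<exists>r v. independent_upto v r \<and> X = (\<Sum>i<r. outer (v i) (v i))"
  using assms
proof (induction "card {p. X $ p $ p \<noteq> 0}" arbitrary: X rule: less_induct)
  case less
  show ?case
  proof (cases "\<forall>p. X $ p $ p = 0")
    case True
    then have "X = 0"
      using psd_diag_eq_0_imp_column_eq_0[OF less.prems] by (simp add: vec_eq_iff)
    then show ?thesis
      by (intro exI[of _ 0]) (simp add: independent_upto_def)
  next
    case False
    then obtain e where "X $ e $ e \<noteq> 0"
      by blast
    then obtain v where psd': "psd (X - outer v v)" and "v $ e \<noteq> 0"
      and sub: "{p. (X - outer v v) $ p $ p \<noteq> 0} \<subseteq> {p. X $ p $ p \<noteq> 0} - {e}"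
      using psd_split_off_outer[OF less.prems] by blast
    have "card {p. (X - outer v v) $ p $ p \<noteq> 0} < card {p. X $ p $ p \<noteq> 0}"
      using sub \<open>X $ e $ e \<noteq> 0\<close> by (intro psubset_card_mono) auto
    then obtain r w where "independent_upto w r" and X': "X - outer v v = (\<Sum>i<r. outer (w i) (w i))"
      using less.hyps[OF _ psd'] by blast
    have "(X - outer v v) $ e $ e = 0"
      using sub by blast
    then have "\<forall>i<r. w i $ e = 0"
      unfolding X' using sum_outer_diag_eq_0_imp by blast
    then have "independent_upto (w(r := v)) (Suc r)"
      using independent_upto_fun_upd \<open>independent_upto w r\<close> \<open>v $ e \<noteq> 0\<close> by blast
    moreover have "(\<Sum>i<r. outer ((w(r := v)) i) ((w(r := v)) i)) = (\<Sum>i<r. outer (w i) (w i))"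
      by (intro sum.cong) auto
    then have "X = (\<Sum>i<Suc r. outer ((w(r := v)) i) ((w(r := v)) i))"
      using X' by (simp add: algebra_simps)
    ultimately show ?thesis
      by blast
  qed
qed

lemma extreme_seed_rank_le:
  fixes X :: "complex^('d::finite \<times> 'm::finite)^('d \<times> 'm)"
  assumes "X extreme_point_of seeds"
  shows "rank X \<le> CARD('m)"
proof -
  have "psd X"
    using assms by (simp add: extreme_point_of_def seeds_def)
  then obtain r v where indep: "independent_upto v r" and X: "X = (\<Sum>i<r. outer (v i) (v i))"
    using psd_eq_sum_outer_independent by blast
  have "card ({..<r} \<times> {..<r}) \<le> CARD('m) * CARD('m)"
    using lin_indep_family_card_le[OF extreme_seed_imp_lin_indep[OF indep X assms]] by simp
  then have "r\<^sup>2 \<le> CARD('m)\<^sup>2"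
    by (simp add: power2_eq_square)
  then have "r \<le> CARD('m)"
    by (rule power2_le_imp_le) simp
  then show ?thesis
    using rank_sum_outer_le[of v r] X by simp
qed

theorem theorem3:
  fixes Xi :: "complex^('d::finite \<times> 'm::finite)^('d \<times> 'm)"
    and w :: "nat \<Rightarrow> complex^('d \<times> 'm)"
    and W :: "nat \<Rightarrow> complex^'d^'m"
    and r :: nat
  assumes "Xi \<in> seeds"
    and "r = rank Xi"
    and "\<forall>i<r. w i \<noteq> 0"
    and "\<forall>i<r. \<forall>j<r. i \<noteq> j \<longrightarrow> cinner (w i) (w j) = 0"
    and "Xi = (\<Sum>i<r. outer (w i) (w i))"
    and "\<forall>i<r. \<forall>l a. w i $ (l, a) = W i $ a $ l"
  shows "(Xi extreme_point_of seeds \<longleftrightarrow>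
           lin_indep_family (\<lambda>(i, j). W i ** adj (W j)) ({..<r} \<times> {..<r}))
         \<and> (\<forall>X :: complex^('d \<times> 'm)^('d \<times> 'm).
              X extreme_point_of seeds \<longrightarrow> rank X \<le> CARD('m))"
proof
  have "ptrace_h (outer (w i) (w j)) = W i ** adj (W j)" if "i < r" "j < r" for i j
    using assms(6) that by (simp add: vec_eq_iff ptrace_h_def outer_def matrix_matrix_mult_def adj_def)
  then have "lin_indep_family (\<lambda>(i, j). W i ** adj (W j)) ({..<r} \<times> {..<r}) \<longleftrightarrow>
      lin_indep_family (\<lambda>(i, j). ptrace_h (outer (w i) (w j))) ({..<r} \<times> {..<r})"
    by (intro lin_indep_family_cong) auto
  then show "Xi extreme_point_of seeds \<longleftrightarrow>
      lin_indep_family (\<lambda>(i, j). W i ** adj (W j)) ({..<r} \<times> {..<r})"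
    using extreme_seed_imp_lin_indep[OF orthogonal_imp_independent_upto[OF assms(3,4)] assms(5)]
      lin_indep_imp_extreme_seed[OF assms(3,4,5) _ assms(1)] by blast
qed (use extreme_seed_rank_le in blast)

end
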